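(* Let $n\in\mathbb{N}$ and $a_0,a_1,a_2\in\mathbb{C}$ with $a_0\neq0$, and let $\lambda_1,\lambda_2$ be the roots of $a_0\lambda^2+a_1\lambda+a_2=0$. If $\Re(\lambda_1)\Re(\lambda_2)\neq0$, then the equation $a_0\bm{x}''+a_1\bm{x}'+a_2\bm{x}=\bm{0}$ (with $\bm{x}\in C^2(\mathbb{R},\mathbb{C}^n)$) is Ulam stable on $\mathbb{R}$, and $\dfrac{1}{|a_0\Re(\lambda_1)\Re(\lambda_2)|}$ is an Ulam constant.
   Context: $\|\cdot\|$ is a norm on $\mathbb{C}^n$. Ulam stability: the equation $\alpha(t)\bm{x}''+\beta(t)\bm{x}'+\gamma(t)\bm{x}=\bm{f}(t)$ is Ulam stable on $I$ if there exists a constant $L>0$ such that for every $\varepsilon>0$ and every $\bm{\xi}\in C^2(I,\mathbb{C}^n)$ with $\sup_{t\in I}\|\alpha(t)\bm{\xi}''(t)+\beta(t)\bm{\xi}'(t)+\gamma(t)\bm{\xi}(t)-\bm{f}(t)\|\le\varepsilon$, there exists a solution $\bm{x}\in C^2(I,\mathbb{C}^n)$ of the equation with $\sup_{t\in I}\|\bm{\xi}(t)-\bm{x}(t)\|\le L\varepsilon$; such an $L$ is called an Ulam constant for the equation on $I$. $\Re(z)$ denotes the real part of $z$. *)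

theory Defs
  imports "HOL-Analysis.Analysis"
begin

text \<open>Vectors of C^n are modelled as complex ^ 'n with 'n a finite index type
  (n = CARD('n)). Scalar multiplication by a complex number is componentwise.\<close>

definition csmult :: "complex \<Rightarrow> complex ^ 'n \<Rightarrow> complex ^ 'n" where
  "csmult c v = (\<chi> i. c * v $ i)"

definition is_norm :: "(complex ^ 'n \<Rightarrow> real) \<Rightarrow> bool" where
  "is_norm N \<longleftrightarrow>
     (\<forall>v. 0 \<le> N v) \<and> (\<forall>v. N v = 0 \<longleftrightarrow> v = 0) \<and>
     (\<forall>v w. N (v + w) \<le> N v + N w) \<and>
     (\<forall>c v. N (csmult c v) = cmod c * N v)"

definition D1 :: "real set \<Rightarrow> (real \<Rightarrow> complex ^ 'n) \<Rightarrow> real \<Rightarrow> complex ^ 'n" where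
  "D1 I x t = vector_derivative x (at t within I)"

definition D2 :: "real set \<Rightarrow> (real \<Rightarrow> complex ^ 'n) \<Rightarrow> real \<Rightarrow> complex ^ 'n" where
  "D2 I x t = vector_derivative (D1 I x) (at t within I)"

definition C2_on :: "real set \<Rightarrow> (real \<Rightarrow> complex ^ 'n) \<Rightarrow> bool" where
  "C2_on I x \<longleftrightarrow>
     (\<forall>t\<in>I. (x has_vector_derivative D1 I x t) (at t within I)) \<and>
     (\<forall>t\<in>I. (D1 I x has_vector_derivative D2 I x t) (at t within I)) \<and>
     continuous_on I (D2 I x)"

definition ode_op :: "real set \<Rightarrow> (real \<Rightarrow> complex) \<Rightarrow> (real \<Rightarrow> complex) \<Rightarrow> (real \<Rightarrow> complex)
    \<Rightarrow> (real \<Rightarrow> complex ^ 'n) \<Rightarrow> real \<Rightarrow> complex ^ 'n" where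
  "ode_op I \<alpha> \<beta> \<gamma> x t = csmult (\<alpha> t) (D2 I x t) + csmult (\<beta> t) (D1 I x t) + csmult (\<gamma> t) (x t)"

definition ulam_constant :: "(complex ^ 'n \<Rightarrow> real) \<Rightarrow> real set \<Rightarrow> (real \<Rightarrow> complex) \<Rightarrow>
    (real \<Rightarrow> complex) \<Rightarrow> (real \<Rightarrow> complex) \<Rightarrow> (real \<Rightarrow> complex ^ 'n) \<Rightarrow> real \<Rightarrow> bool" where
  "ulam_constant N I \<alpha> \<beta> \<gamma> f L \<longleftrightarrow> L > 0 \<and>
     (\<forall>\<epsilon>>0. \<forall>\<xi>. C2_on I \<xi> \<and> (\<forall>t\<in>I. N (ode_op I \<alpha> \<beta> \<gamma> \<xi> t - f t) \<le> \<epsilon>) \<longrightarrow>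
        (\<exists>x. C2_on I x \<and> (\<forall>t\<in>I. ode_op I \<alpha> \<beta> \<gamma> x t = f t) \<and>
             (\<forall>t\<in>I. N (\<xi> t - x t) \<le> L * \<epsilon>)))"

definition ulam_stable :: "(complex ^ 'n \<Rightarrow> real) \<Rightarrow> real set \<Rightarrow> (real \<Rightarrow> complex) \<Rightarrow>
    (real \<Rightarrow> complex) \<Rightarrow> (real \<Rightarrow> complex) \<Rightarrow> (real \<Rightarrow> complex ^ 'n) \<Rightarrow> bool" where
  "ulam_stable N I \<alpha> \<beta> \<gamma> f \<longleftrightarrow> (\<exists>L. ulam_constant N I \<alpha> \<beta> \<gamma> f L)"

end

theory Submission
  imports Defs "HOL-Real_Asymp.Real_Asymp"
begin

text \<open>Write the equation as a0 (D - l1) (D - l2) x = 0. For the first-order equation y' = l y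
  with Re l > 0: if N (y' - l y) \<le> \<delta>, then w(t) = exp (- l t) y(t) satisfies
  N (w') \<le> \<delta> exp (- Re l t), so w converges to some c as t \<rightarrow> \<infinity>, and integrating this bound
  from t to \<infinity> gives N (y(t) - exp (l t) c) \<le> \<delta> / Re l; reversing time handles Re l < 0.
  Applying this to y = x' - l2 x and then to x minus a particular solution of
  z' - l2 z = exp (l1 t) c1 gives the constant 1 / |a0 Re l1 Re l2|. Because N is an arbitrary
  norm, the mean value inequality for N is obtained from linear functionals dominated by N,
  which exist by the separating hyperplane theorem.\<close>

lemma csmult_eq_scalar_mult: "csmult = (*s)"
  by (simp add: fun_eq_iff csmult_def vector_scalar_mult_def)

lemma norm_scalar_mult_complex: "norm (c *s v) = cmod c * norm (v :: complex ^ 'n)"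
proof -
  have "norm (c *s v) = L2_set (\<lambda>i. cmod c * norm (v $ i)) UNIV"
    by (simp add: norm_vec_def norm_mult)
  also have "\<dots> = cmod c * norm v"
    by (simp add: L2_set_right_distrib norm_vec_def)
  finally show ?thesis .
qed

lemma bounded_bilinear_scalar_mult_complex:
  "bounded_bilinear ((*s) :: complex \<Rightarrow> complex ^ 'n \<Rightarrow> complex ^ 'n)"
proof
  show "\<exists>K. \<forall>a b. norm (a *s (b :: complex ^ 'n)) \<le> norm a * norm b * K"
    by (rule exI[of _ 1]) (simp add: norm_scalar_mult_complex)
qed (simp_all add: vec_eq_iff algebra_simps scaleR_conv_of_real[where 'a=complex])

lemma has_vector_derivative_scalar_mult_complex [derivative_intros]:
  fixes g :: "real \<Rightarrow> complex ^ 'n"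
  shows "(f has_vector_derivative f') (at x within S) \<Longrightarrow> (g has_vector_derivative g') (at x within S)
    \<Longrightarrow> ((\<lambda>x. f x *s g x) has_vector_derivative f x *s g' + f' *s g x) (at x within S)"
  by (rule bounded_bilinear.has_vector_derivative[OF bounded_bilinear_scalar_mult_complex])

lemma continuous_on_scalar_mult_complex [continuous_intros]:
  fixes g :: "real \<Rightarrow> complex ^ 'n"
  shows "continuous_on S f \<Longrightarrow> continuous_on S g \<Longrightarrow> continuous_on S (\<lambda>x. f x *s g x)"
  by (rule bounded_bilinear.continuous_on[OF bounded_bilinear_scalar_mult_complex])

lemma has_vector_derivative_cexp_linear [derivative_intros]:
  fixes l :: complex
  shows "((\<lambda>t. exp (l * of_real t)) has_vector_derivative l * exp (l * of_real t)) (at t within S)"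
proof -
  have "((\<lambda>z. exp (l * z)) has_field_derivative l * exp (l * of_real t)) (at (of_real t))"
    by (auto intro!: derivative_eq_intros)
  then show ?thesis by (rule has_vector_derivative_real_field)
qed

lemma C2_on_UNIV_intro:
  assumes "\<And>t. (x has_vector_derivative x' t) (at t)"
    and "\<And>t. (x' has_vector_derivative x'' t) (at t)"
    and "continuous_on UNIV x''"
  shows "C2_on UNIV x" "D1 UNIV x = x'" "D2 UNIV x = x''"
proof -
  show D1: "D1 UNIV x = x'"
    using assms(1) by (simp add: fun_eq_iff D1_def vector_derivative_at)
  show D2: "D2 UNIV x = x''"
    using assms(2) by (simp add: fun_eq_iff D2_def D1 vector_derivative_at)
  show "C2_on UNIV x"
    using assms by (simp add: C2_on_def D1 D2)
qed

lemma forced_exp_solution: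
  fixes l1 l2 :: complex
  obtains p :: "real \<Rightarrow> complex"
  where "\<And>t. (p has_vector_derivative l2 * p t + exp (l1 * of_real t)) (at t)"
proof (cases "l1 = l2")
  case True
  have "((\<lambda>z. z * exp (l1 * z)) has_field_derivative
      l2 * (of_real t * exp (l1 * of_real t)) + exp (l1 * of_real t)) (at (of_real t))" for t
    using True by (auto intro!: derivative_eq_intros simp: algebra_simps)
  then show ?thesis using that has_vector_derivative_real_field by blast
next
  case False
  define K where "K = 1 / (l1 - l2)"
  have K: "K * l1 = l2 * K + 1"
    using False by (simp add: K_def field_simps)
  have "((\<lambda>z. K * exp (l1 * z)) has_field_derivative
      l2 * (K * exp (l1 * of_real t)) + exp (l1 * of_real t)) (at (of_real t))" for t
  proof -
    have "((\<lambda>z. K * exp (l1 * z)) has_field_derivative K * l1 * exp (l1 * of_real t)) (at (of_real t))"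
      by (auto intro!: derivative_eq_intros)
    then show ?thesis unfolding K by (simp add: algebra_simps)
  qed
  then show ?thesis using that has_vector_derivative_real_field by blast
qed

lemma factored_equation_solution:
  fixes c1 c2 :: "complex ^ 'n"
  assumes p: "\<And>t. (p has_vector_derivative l2 * p t + exp (l1 * of_real t)) (at t)"
  defines "x \<equiv> \<lambda>t. p t *s c1 + exp (l2 * of_real t) *s c2"
  shows "C2_on UNIV x"
    and "D2 UNIV x t - (l1 + l2) *s D1 UNIV x t + (l1 * l2) *s x t = 0"
proof -
  define p' where "p' t = l2 * p t + exp (l1 * of_real t)" for t
  define x' where "x' t = p' t *s c1 + (l2 * exp (l2 * of_real t)) *s c2" for t
  define x'' where "x'' t = (l2 * p' t + l1 * exp (l1 * of_real t)) *s c1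
    + (l2 * l2 * exp (l2 * of_real t)) *s c2" for t
  have p_cont: "continuous_on UNIV p"
    using p by (meson continuous_at_imp_continuous_on has_vector_derivative_continuous)
  have p': "(p' has_vector_derivative l2 * p' t + l1 * exp (l1 * of_real t)) (at t)" for t
    unfolding p'_def by (auto intro!: derivative_eq_intros p simp: algebra_simps)
  have "(x has_vector_derivative x' t) (at t)" for t
    unfolding x_def x'_def by (auto intro!: derivative_eq_intros p simp: p'_def vector_sadd_rdistrib)
  moreover have "(x' has_vector_derivative x'' t) (at t)" for t
    unfolding x'_def x''_def by (auto intro!: derivative_eq_intros p')
  moreover have "continuous_on UNIV x''"
    unfolding x''_def p'_def by (intro continuous_intros p_cont)
  ultimately have "C2_on UNIV x" "D1 UNIV x = x'" "D2 UNIV x = x''"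
    by (rule C2_on_UNIV_intro)+
  then show "C2_on UNIV x" "D2 UNIV x t - (l1 + l2) *s D1 UNIV x t + (l1 * l2) *s x t = 0"
    by (simp_all add: x_def x'_def x''_def p'_def vec_eq_iff algebra_simps)
qed

context
  fixes N :: "complex ^ 'n \<Rightarrow> real"
  assumes N: "is_norm N"
begin

lemma N_nonneg: "0 \<le> N v"
  and N_eq_0_iff: "N v = 0 \<longleftrightarrow> v = 0"
  and N_triangle: "N (v + w) \<le> N v + N w"
  and N_scalar_mult: "N (c *s v) = cmod c * N v"
  using N by (auto simp: is_norm_def csmult_eq_scalar_mult)

lemma N_zero [simp]: "N 0 = 0"
  by (simp add: N_eq_0_iff)

lemma N_pos: "v \<noteq> 0 \<Longrightarrow> 0 < N v"
  using N_nonneg N_eq_0_iff by (metis order_le_less)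

lemma N_minus_commute: "N (v - w) = N (w - v)"
  using N_scalar_mult[of "-1" "v - w"] by (simp add: vector_sneg_minus1[symmetric])

lemma N_scaleR: "N (r *\<^sub>R v) = \<bar>r\<bar> * N v"
proof -
  have "r *\<^sub>R v = of_real r *s v"
    by (simp add: vec_eq_iff scaleR_conv_of_real[where 'a=complex])
  then show ?thesis by (simp add: N_scalar_mult)
qed

lemma N_sum: "N (sum f A) \<le> (\<Sum>i\<in>A. N (f i))"
proof (induction A rule: infinite_finite_induct)
  case (insert x F)
  then show ?case using N_triangle[of "f x" "sum f F"] by simp
qed simp_all

lemma N_le_norm: "N v \<le> (\<Sum>i\<in>UNIV. N (axis i 1)) * norm v"
proof -
  have "N v \<le> (\<Sum>i\<in>UNIV. N (v $ i *s axis i 1))"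
    by (subst (1) basis_expansion[symmetric]) (rule N_sum)
  also have "\<dots> = (\<Sum>i\<in>UNIV. cmod (v $ i) * N (axis i 1))"
    by (simp add: N_scalar_mult)
  also have "\<dots> \<le> (\<Sum>i\<in>UNIV. norm v * N (axis i 1))"
    by (intro sum_mono mult_right_mono Finite_Cartesian_Product.norm_nth_le N_nonneg)
  finally show ?thesis by (simp add: sum_distrib_left mult.commute)
qed

lemma continuous_on_N: "continuous_on S N"
proof -
  define C where "C = (\<Sum>i\<in>UNIV. N (axis i 1))"
  have "C-lipschitz_on UNIV N"
  proof (rule lipschitz_onI)
    fix x y
    have "N x \<le> N y + N (x - y)" "N y \<le> N x + N (x - y)"
      using N_triangle[of y "x - y"] N_triangle[of x "y - x"] N_minus_commute[of x y] by simp_all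
    then have "dist (N x) (N y) \<le> N (x - y)" by (simp add: dist_real_def abs_le_iff)
    also have "\<dots> \<le> C * dist x y" using N_le_norm[of "x - y"] by (simp add: C_def dist_norm)
    finally show "dist (N x) (N y) \<le> C * dist x y" .
  qed (simp add: C_def sum_nonneg N_nonneg)
  then show ?thesis by (meson continuous_on_subset lipschitz_on_continuous_on top_greatest)
qed

lemma norm_le_N: obtains m where "0 < m" "\<And>v. m * norm v \<le> N v"
proof -
  obtain x where x: "x \<in> sphere 0 1" "\<And>y. y \<in> sphere 0 1 \<Longrightarrow> N x \<le> N y"
    using continuous_attains_inf[OF compact_sphere _ continuous_on_N, of 0 1] by auto
  have "N x * norm v \<le> N v" for v
  proof (cases "v = 0")
    case False
    then have "N x \<le> N ((1 / norm v) *\<^sub>R v)" by (intro x(2)) simp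
    then show ?thesis using False by (simp add: N_scaleR field_simps)
  qed simp
  moreover have "0 < N x" using x(1) by (intro N_pos) auto
  ultimately show ?thesis using that by blast
qed

lemma N_dominated_functional:
  assumes "0 \<le> r" "r < N v"
  obtains w where "r < inner w v" "\<And>u. inner w u \<le> N u"
proof -
  define r' where "r' = (r + N v) / 2"
  have r': "0 < r'" "r < r'" "r' < N v" using assms by (auto simp: r'_def)
  have "convex {u. N u \<le> r'}"
  proof (rule convexI)
    fix x y :: "complex ^ 'n" and s t :: real
    assume "x \<in> {u. N u \<le> r'}" "y \<in> {u. N u \<le> r'}" "0 \<le> s" "0 \<le> t" "s + t = 1"
    then have "N (s *\<^sub>R x + t *\<^sub>R y) \<le> s * r' + t * r'"
      using N_triangle[of "s *\<^sub>R x" "t *\<^sub>R y"]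
      by (simp add: N_scaleR) (smt (verit) mult_left_mono)
    then show "s *\<^sub>R x + t *\<^sub>R y \<in> {u. N u \<le> r'}" using \<open>s + t = 1\<close> by (simp add: distrib_right[symmetric])
  qed
  moreover have "closed {u. N u \<le> r'}"
    by (intro closed_Collect_le continuous_on_N continuous_on_const)
  ultimately obtain a b where ab: "inner a v < b" "\<And>u. N u \<le> r' \<Longrightarrow> b < inner a u"
    using separating_hyperplane_closed_point[of "{u. N u \<le> r'}" v] r' by auto
  have b: "b < 0" using ab(2)[of 0] r' by simp
  define w where "w = (r' / b) *\<^sub>R a"
  have "inner w u \<le> N u" for u
  proof (cases "u = 0")
    case False
    then have "0 < N u" by (rule N_pos)
    then have "b < inner a ((r' / N u) *\<^sub>R u)" using r' by (intro ab(2)) (simp add: N_scaleR)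
    then show ?thesis using \<open>0 < N u\<close> r' b by (simp add: w_def field_simps)
  qed simp
  moreover have "r < inner w v"
  proof -
    have "r' * inner a v < r' * b" using ab(1) r' by simp
    then have "r' < r' * inner a v / b" using b by (simp add: less_divide_eq)
    then show ?thesis using r' by (simp add: w_def)
  qed
  ultimately show ?thesis using that by blast
qed

lemma N_mean_value_bound:
  assumes "a \<le> b"
    and f: "\<And>s. a \<le> s \<Longrightarrow> s \<le> b \<Longrightarrow> (f has_vector_derivative f' s) (at s)"
    and B: "\<And>s. a \<le> s \<Longrightarrow> s \<le> b \<Longrightarrow> (B has_real_derivative B' s) (at s)"
    and le: "\<And>s. a \<le> s \<Longrightarrow> s \<le> b \<Longrightarrow> N (f' s) \<le> B' s"
  shows "N (f b - f a) \<le> B b - B a"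
proof (rule ccontr)
  assume "\<not> ?thesis"
  then have gt: "B b - B a < N (f b - f a)" by simp
  have "B a \<le> B b"
  proof (rule DERIV_nonneg_imp_nondecreasing[OF \<open>a \<le> b\<close>])
    fix s assume s: "a \<le> s" "s \<le> b"
    show "\<exists>y. (B has_real_derivative y) (at s) \<and> 0 \<le> y"
      using B[OF s] le[OF s] N_nonneg[of "f' s"] by (blast intro: order_trans)
  qed
  then obtain w where w: "B b - B a < inner w (f b - f a)" "\<And>u. inner w u \<le> N u"
    using N_dominated_functional[OF _ gt] by auto
  have "inner w (f b) - B b \<le> inner w (f a) - B a"
  proof (rule DERIV_nonpos_imp_nonincreasing[OF \<open>a \<le> b\<close>])
    fix s assume s: "a \<le> s" "s \<le> b"
    have "((\<lambda>s. inner w (f s)) has_real_derivative inner w (f' s)) (at s)"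
      using bounded_linear.has_vector_derivative[OF bounded_linear_inner_right f[OF s]]
      by (simp add: has_real_derivative_iff_has_vector_derivative)
    then have "((\<lambda>s. inner w (f s) - B s) has_real_derivative inner w (f' s) - B' s) (at s)"
      by (intro derivative_intros B[OF s])
    moreover have "inner w (f' s) - B' s \<le> 0" using w(2)[of "f' s"] le[OF s] by linarith
    ultimately show "\<exists>y. ((\<lambda>s. inner w (f s) - B s) has_real_derivative y) (at s) \<and> y \<le> 0" by blast
  qed
  then show False using w(1) by (simp add: inner_diff_right)
qed

lemma N_tail_limit:
  fixes w :: "real \<Rightarrow> complex ^ 'n" and g :: "real \<Rightarrow> real"
  assumes osc: "\<And>S T. S \<le> T \<Longrightarrow> N (w T - w S) \<le> g S"
    and g: "(g \<longlongrightarrow> 0) at_top"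
  obtains c where "\<And>S. N (c - w S) \<le> g S"
proof -
  obtain m where m: "0 < m" "\<And>v. m * norm v \<le> N v" using norm_le_N by blast
  have g_seq: "(\<lambda>n. g (real n)) \<longlonglongrightarrow> 0"
    using filterlim_compose[OF g filterlim_real_sequentially] .
  have "Cauchy (\<lambda>n. w (real n))"
  proof (rule metric_CauchyI)
    fix e :: real assume "0 < e"
    then obtain M where M: "g (real M) < m * e / 2"
      using order_tendstoD(2)[OF g_seq, of "m * e / 2"] m(1) by (auto simp: eventually_sequentially)
    have "dist (w (real i)) (w (real j)) < e" if "M \<le> i" "M \<le> j" for i j
    proof -
      have "m * dist (w (real i)) (w (real j)) \<le> N (w (real i) - w (real j))"
        using m(2) by (simp add: dist_norm)
      also have "\<dots> \<le> N (w (real i) - w (real M)) + N (w (real M) - w (real j))"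
        using N_triangle[of "w (real i) - w (real M)" "w (real M) - w (real j)"] by simp
      also have "\<dots> \<le> 2 * g (real M)"
        using osc[of "real M" "real i"] osc[of "real M" "real j"] that
          N_minus_commute[of "w (real M)" "w (real j)"] by simp
      also have "\<dots> < m * e" using M by linarith
      finally show ?thesis using m(1) by simp
    qed
    then show "\<exists>M. \<forall>i\<ge>M. \<forall>j\<ge>M. dist (w (real i)) (w (real j)) < e" by blast
  qed
  then obtain c where c: "(\<lambda>n. w (real n)) \<longlonglongrightarrow> c"
    by (auto simp: Cauchy_convergent_iff convergent_def)
  have "N (c - w S) \<le> g S" for S
  proof (rule tendsto_upperbound)
    show "(\<lambda>n. N (w (real n) - w S)) \<longlonglongrightarrow> N (c - w S)"
      by (intro continuous_on_tendsto_compose[OF continuous_on_N[of UNIV]] tendsto_intros c) auto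
    obtain k :: nat where "S \<le> real k" using real_arch_simple by blast
    then show "\<forall>\<^sub>F n in sequentially. N (w (real n) - w S) \<le> g S"
      by (auto simp: eventually_sequentially intro!: exI[of _ k] osc)
  qed simp
  then show ?thesis using that by blast
qed

lemma first_order_stable_Re_pos:
  assumes l: "0 < Re l"
    and y: "\<And>t. (y has_vector_derivative y' t) (at t)"
    and bound: "\<And>t. N (y' t - l *s y t) \<le> \<delta>"
  obtains c where "\<And>t. N (y t - exp (l * of_real t) *s c) \<le> \<delta> / Re l"
proof -
  have \<delta>: "0 \<le> \<delta>" using bound[of 0] N_nonneg order_trans by blast
  define w where "w s = exp (- l * of_real s) *s y s" for s
  define g where "g s = \<delta> / Re l * exp (- (Re l * s))" for s
  have w': "(w has_vector_derivative exp (- l * of_real s) *s (y' s - l *s y s)) (at s)" for s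
    unfolding w_def
    by (rule derivative_eq_intros has_vector_derivative_cexp_linear y refl)+
       (simp add: vec_eq_iff algebra_simps)
  have "N (w T - w S) \<le> g S" if "S \<le> T" for S T
  proof -
    have "N (w T - w S) \<le> - g T - - g S"
    proof (rule N_mean_value_bound[OF that w'])
      fix s
      show "((\<lambda>s. - g s) has_real_derivative \<delta> * exp (- (Re l * s))) (at s)"
        unfolding g_def using l by (auto intro!: derivative_eq_intros)
      show "N (exp (- l * of_real s) *s (y' s - l *s y s)) \<le> \<delta> * exp (- (Re l * s))"
        using bound[of s] unfolding N_scalar_mult by (simp add: mult.commute)
    qed
    also have "\<dots> \<le> g S" using l \<delta> by (simp add: g_def)
    finally show ?thesis .
  qed
  moreover have "(g \<longlongrightarrow> 0) at_top"
    unfolding g_def using l by real_asymp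
  ultimately obtain c where c: "\<And>S. N (c - w S) \<le> g S"
    using N_tail_limit by blast
  have "N (y t - exp (l * of_real t) *s c) \<le> \<delta> / Re l" for t
  proof -
    have "y t - exp (l * of_real t) *s c = exp (l * of_real t) *s (w t - c)"
      by (simp add: w_def vec_eq_iff exp_minus field_simps)
    then have "N (y t - exp (l * of_real t) *s c) = exp (Re l * t) * N (w t - c)"
      by (simp only: N_scalar_mult) simp
    also have "\<dots> \<le> exp (Re l * t) * g t"
      using c[of t] by (simp add: N_minus_commute[of "w t"] mult_left_mono)
    also have "\<dots> = \<delta> / Re l" by (simp add: g_def exp_minus field_simps)
    finally show ?thesis .
  qed
  then show ?thesis using that by blast
qed

lemma first_order_stable:
  assumes l: "Re l \<noteq> 0"
    and y: "\<And>t. (y has_vector_derivative y' t) (at t)"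
    and bound: "\<And>t. N (y' t - l *s y t) \<le> \<delta>"
  obtains c where "\<And>t. N (y t - exp (l * of_real t) *s c) \<le> \<delta> / \<bar>Re l\<bar>"
proof (cases "0 < Re l")
  case True
  obtain c where "\<And>t. N (y t - exp (l * of_real t) *s c) \<le> \<delta> / Re l"
    using first_order_stable_Re_pos[OF True y bound] by blast
  then show ?thesis using that[of c] True by simp
next
  case False
  have y_rev: "((\<lambda>t. y (- t)) has_vector_derivative - y' (- t)) (at t)" for t
  proof -
    have "((y \<circ> uminus) has_vector_derivative (- 1) *\<^sub>R y' (- t)) (at t)"
      by (rule vector_diff_chain_at) (auto intro!: derivative_eq_intros y)
    then show ?thesis by (simp add: o_def)
  qed
  have "N (- y' (- t) - (- l) *s y (- t)) \<le> \<delta>" for t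
    using bound[of "- t"] N_minus_commute[of "y' (- t)" "l *s y (- t)"]
    by (simp add: vector_smult_lneg)
  then obtain c where c: "\<And>t. N (y (- t) - exp (- l * of_real t) *s c) \<le> \<delta> / Re (- l)"
    using first_order_stable_Re_pos[of "- l", OF _ y_rev] False l by auto
  show ?thesis
  proof (rule that)
    fix t
    show "N (y t - exp (l * of_real t) *s c) \<le> \<delta> / \<bar>Re l\<bar>"
      using c[of "- t"] False l by simp
  qed
qed

lemma factored_second_order_stable:
  assumes l1: "Re l1 \<noteq> 0" and l2: "Re l2 \<noteq> 0"
    and y: "\<And>t. (y has_vector_derivative y' t) (at t)"
    and y': "\<And>t. (y' has_vector_derivative y'' t) (at t)"
    and bound: "\<And>t. N (y'' t - (l1 + l2) *s y' t + (l1 * l2) *s y t) \<le> \<delta>"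
    and p: "\<And>t. (p has_vector_derivative l2 * p t + exp (l1 * of_real t)) (at t)"
  obtains c1 c2
  where "\<And>t. N (y t - (p t *s c1 + exp (l2 * of_real t) *s c2)) \<le> \<delta> / \<bar>Re l1 * Re l2\<bar>"
proof -
  define \<eta> where "\<eta> t = y' t - l2 *s y t" for t
  have \<eta>: "(\<eta> has_vector_derivative y'' t - l2 *s y' t) (at t)" for t
    unfolding \<eta>_def by (auto intro!: derivative_eq_intros y y')
  have "N (y'' t - l2 *s y' t - l1 *s \<eta> t) \<le> \<delta>" for t
  proof -
    have "y'' t - l2 *s y' t - l1 *s \<eta> t = y'' t - (l1 + l2) *s y' t + (l1 * l2) *s y t"
      by (simp add: \<eta>_def vec_eq_iff algebra_simps)
    then show ?thesis using bound[of t] by (simp only:)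
  qed
  then obtain c1 where c1: "\<And>t. N (\<eta> t - exp (l1 * of_real t) *s c1) \<le> \<delta> / \<bar>Re l1\<bar>"
    using first_order_stable[OF l1 \<eta>] by blast
  define u where "u t = y t - p t *s c1" for t
  have u: "(u has_vector_derivative y' t - (l2 * p t + exp (l1 * of_real t)) *s c1) (at t)" for t
    unfolding u_def by (auto intro!: derivative_eq_intros y p)
  have "N (y' t - (l2 * p t + exp (l1 * of_real t)) *s c1 - l2 *s u t) \<le> \<delta> / \<bar>Re l1\<bar>" for t
  proof -
    have "y' t - (l2 * p t + exp (l1 * of_real t)) *s c1 - l2 *s u t = \<eta> t - exp (l1 * of_real t) *s c1"
      by (simp add: u_def \<eta>_def vec_eq_iff algebra_simps)
    then show ?thesis using c1[of t] by (simp only:)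
  qed
  then obtain c2 where c2: "\<And>t. N (u t - exp (l2 * of_real t) *s c2) \<le> \<delta> / \<bar>Re l1\<bar> / \<bar>Re l2\<bar>"
    using first_order_stable[OF l2 u] by blast
  have "N (y t - (p t *s c1 + exp (l2 * of_real t) *s c2)) \<le> \<delta> / \<bar>Re l1 * Re l2\<bar>" for t
    using c2[of t] by (simp add: u_def abs_mult diff_diff_eq)
  then show ?thesis using that by blast
qed

lemma ulam_constant_factored:
  assumes "a0 \<noteq> 0" "Re l1 \<noteq> 0" "Re l2 \<noteq> 0"
  shows "ulam_constant N UNIV (\<lambda>_. a0) (\<lambda>_. - a0 * (l1 + l2)) (\<lambda>_. a0 * (l1 * l2)) (\<lambda>_. 0)
    (1 / \<bar>cmod a0 * Re l1 * Re l2\<bar>)"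
  unfolding ulam_constant_def
proof (intro conjI allI impI)
  show "0 < 1 / \<bar>cmod a0 * Re l1 * Re l2\<bar>" using assms by simp
  have op: "ode_op UNIV (\<lambda>_. a0) (\<lambda>_. - a0 * (l1 + l2)) (\<lambda>_. a0 * (l1 * l2)) x t
      = a0 *s (D2 UNIV x t - (l1 + l2) *s D1 UNIV x t + (l1 * l2) *s x t)"
    for x :: "real \<Rightarrow> complex ^ 'n" and t
    by (simp add: ode_op_def csmult_eq_scalar_mult vec_eq_iff algebra_simps)
  fix \<epsilon> :: real and \<xi> :: "real \<Rightarrow> complex ^ 'n"
  assume "C2_on UNIV \<xi> \<and> (\<forall>t\<in>UNIV.
    N (ode_op UNIV (\<lambda>_. a0) (\<lambda>_. - a0 * (l1 + l2)) (\<lambda>_. a0 * (l1 * l2)) \<xi> t - 0) \<le> \<epsilon>)"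
  then have \<xi>: "\<And>t. (\<xi> has_vector_derivative D1 UNIV \<xi> t) (at t)"
      "\<And>t. (D1 UNIV \<xi> has_vector_derivative D2 UNIV \<xi> t) (at t)"
    and op_bound: "\<And>t. cmod a0 * N (D2 UNIV \<xi> t - (l1 + l2) *s D1 UNIV \<xi> t + (l1 * l2) *s \<xi> t) \<le> \<epsilon>"
    unfolding C2_on_def op diff_zero N_scalar_mult by simp_all
  have bound: "\<And>t. N (D2 UNIV \<xi> t - (l1 + l2) *s D1 UNIV \<xi> t + (l1 * l2) *s \<xi> t) \<le> \<epsilon> / cmod a0"
    using op_bound assms(1) by (simp add: le_divide_eq mult.commute)
  obtain p where p: "\<And>t. (p has_vector_derivative l2 * p t + exp (l1 * of_real t)) (at t)"
    using forced_exp_solution by blast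
  obtain c1 c2 where c: "\<And>t. N (\<xi> t - (p t *s c1 + exp (l2 * of_real t) *s c2))
      \<le> \<epsilon> / cmod a0 / \<bar>Re l1 * Re l2\<bar>"
    using factored_second_order_stable[OF assms(2,3) \<xi> bound p] by blast
  define x where "x = (\<lambda>t. p t *s c1 + exp (l2 * of_real t) *s c2)"
  show "\<exists>x. C2_on UNIV x
      \<and> (\<forall>t\<in>UNIV. ode_op UNIV (\<lambda>_. a0) (\<lambda>_. - a0 * (l1 + l2)) (\<lambda>_. a0 * (l1 * l2)) x t = 0)
      \<and> (\<forall>t\<in>UNIV. N (\<xi> t - x t) \<le> 1 / \<bar>cmod a0 * Re l1 * Re l2\<bar> * \<epsilon>)"
  proof (intro exI[of _ x] conjI ballI)
    show "C2_on UNIV x"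
      unfolding x_def by (rule factored_equation_solution(1)[OF p])
    show "ode_op UNIV (\<lambda>_. a0) (\<lambda>_. - a0 * (l1 + l2)) (\<lambda>_. a0 * (l1 * l2)) x t = 0" for t
      unfolding op x_def by (simp only: factored_equation_solution(2)[OF p] vector_smult_rzero)
    show "N (\<xi> t - x t) \<le> 1 / \<bar>cmod a0 * Re l1 * Re l2\<bar> * \<epsilon>" for t
      using c[of t] by (simp add: x_def abs_mult mult.assoc)
  qed
qed

end

theorem corollary3p2:
  fixes N :: "complex ^ 'n \<Rightarrow> real"
    and a0 a1 a2 l1 l2 :: complex
  assumes "is_norm N"
    and "a0 \<noteq> 0"
    and "\<forall>z. a0 * z\<^sup>2 + a1 * z + a2 = a0 * (z - l1) * (z - l2)"
    and "Re l1 * Re l2 \<noteq> 0"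
  shows "ulam_stable N UNIV (\<lambda>_. a0) (\<lambda>_. a1) (\<lambda>_. a2) (\<lambda>_. 0)
       \<and> ulam_constant N UNIV (\<lambda>_. a0) (\<lambda>_. a1) (\<lambda>_. a2) (\<lambda>_. 0)
            (1 / \<bar>cmod a0 * Re l1 * Re l2\<bar>)"
proof -
  have a2: "a2 = a0 * (l1 * l2)"
    using assms(3)[rule_format, of 0] by simp
  have "a1 + a0 * (l1 + l2) = 0"
    using assms(3)[rule_format, of 1] a2 by (simp add: algebra_simps)
  then have a1: "a1 = - a0 * (l1 + l2)"
    by (simp add: eq_neg_iff_add_eq_0)
  have "ulam_constant N UNIV (\<lambda>_. a0) (\<lambda>_. a1) (\<lambda>_. a2) (\<lambda>_. 0) (1 / \<bar>cmod a0 * Re l1 * Re l2\<bar>)"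
    unfolding a1 a2 using ulam_constant_factored[OF assms(1,2)] assms(4) by simp
  then show ?thesis
    unfolding ulam_stable_def by blast
qed

end
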